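(* Every forward complete control system $\Sigma=(X,\mathcal U,\phi)$ that is input-to-state stable (ISS) is norm-to-integral ISS.
   Context: Let $X$, $U$ be Banach spaces and let $\mathcal U$ be a normed vector space of functions $\mathbb R_+\to U$ satisfying: (shift invariance) for all $u\in\mathcal U$ and $\tau\ge0$, $u(\cdot+\tau)\in\mathcal U$ and $\|u(\cdot+\tau)\|_{\mathcal U}\le\|u\|_{\mathcal U}$; (concatenation) for all $u_1,u_2\in\mathcal U$ and $t>0$ the function equal to $u_1(\tau)$ for $\tau\in[0,t]$ and to $u_2(\tau-t)$ for $\tau>t$ belongs to $\mathcal U$. A forward complete control system is a triple $\Sigma=(X,\mathcal U,\phi)$ with $\phi:\mathbb R_+\times X\times\mathcal U\to X$ such that: $\phi(0,x,u)=x$; (causality) $\phi(t,x,u)=\phi(t,x,\tilde u)$ whenever $u|_{[0,t]}=\tilde u|_{[0,t]}$; for each $(x,u)$ the map $t\mapsto\phi(t,x,u)$ is continuous; (cocycle) $\phi(h,\phi(t,x,u),u(t+\cdot))=\phi(t+h,x,u)$ for all $t,h\ge0$, $x\in X$, $u\in\mathcal U$. Comparison functions: $\mathcal K$ = continuous strictly increasing $\gamma:\mathbb R_+\to\mathbb R_+$ with $\gamma(0)=0$; $\mathcal K_\infty$ = unbounded functions in $\mathcal K$; $\mathcal L$ = continuous strictly decreasing $\gamma:\mathbb R_+\to\mathbb R_+$ with $\gamma(t)\to0$; $\mathcal{KL}$ = $\beta:\mathbb R_+^2\to\mathbb R_+$ with $\beta(\cdot,t)\in\mathcal K$ for all $t\ge0$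 and $\beta(r,\cdot)\in\mathcal L$ for all $r>0$. $\Sigma$ is ISS if there are $\beta\in\mathcal{KL}$, $\gamma\in\mathcal K$ with $\|\phi(t,x,u)\|_X\le\beta(\|x\|_X,t)+\gamma(\|u\|_{\mathcal U})$ for all $x\in X$, $u\in\mathcal U$, $t\ge0$. $\Sigma$ is norm-to-integral ISS if there are $\alpha\in\mathcal K$, $\psi,\sigma\in\mathcal K_\infty$ with $\int_0^t\alpha(\|\phi(s,x,u)\|_X)\,ds\le\psi(\|x\|_X)+t\,\sigma(\|u\|_{\mathcal U})$ for all $x\in X$, $u\in\mathcal U$, $t\ge0$. *)

theory Defs
  imports "HOL-Analysis.Analysis"
begin

text \<open>Functions \<open>\<real>\<^sub>+ \<rightarrow> U\<close> are represented as functions \<open>real \<Rightarrow> 'u\<close> that vanish on negative reals.\<close>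

definition shiftf :: "(real \<Rightarrow> 'u::zero) \<Rightarrow> real \<Rightarrow> real \<Rightarrow> 'u" where
  "shiftf u \<tau> = (\<lambda>s. if 0 \<le> s then u (s + \<tau>) else 0)"

definition concatf :: "(real \<Rightarrow> 'u::zero) \<Rightarrow> real \<Rightarrow> (real \<Rightarrow> 'u) \<Rightarrow> real \<Rightarrow> 'u" where
  "concatf u1 t u2 = (\<lambda>s. if s < 0 then 0 else if s \<le> t then u1 s else u2 (s - t))"

definition input_space :: "(real \<Rightarrow> 'u::real_normed_vector) set \<Rightarrow> ((real \<Rightarrow> 'u) \<Rightarrow> real) \<Rightarrow> bool" where
  "input_space UU nU \<longleftrightarrow>
     (\<forall>u\<in>UU. \<forall>s<0. u s = 0) \<and>
     (\<lambda>_. 0) \<in> UU \<and>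
     (\<forall>u\<in>UU. \<forall>v\<in>UU. (\<lambda>s. u s + v s) \<in> UU) \<and>
     (\<forall>u\<in>UU. \<forall>c::real. (\<lambda>s. c *\<^sub>R u s) \<in> UU) \<and>
     (\<forall>u\<in>UU. 0 \<le> nU u \<and> (nU u = 0 \<longleftrightarrow> u = (\<lambda>_. 0))) \<and>
     (\<forall>u\<in>UU. \<forall>v\<in>UU. nU (\<lambda>s. u s + v s) \<le> nU u + nU v) \<and>
     (\<forall>u\<in>UU. \<forall>c::real. nU (\<lambda>s. c *\<^sub>R u s) = \<bar>c\<bar> * nU u) \<and>
     (\<forall>u\<in>UU. \<forall>\<tau>\<ge>0. shiftf u \<tau> \<in> UU \<and> nU (shiftf u \<tau>) \<le> nU u) \<and>
     (\<forall>u1\<in>UU. \<forall>u2\<in>UU. \<forall>t>0. concatf u1 t u2 \<in> UU)"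

definition control_system ::
  "(real \<Rightarrow> 'u::real_normed_vector) set \<Rightarrow> ((real \<Rightarrow> 'u) \<Rightarrow> real) \<Rightarrow> (real \<Rightarrow> 'x \<Rightarrow> (real \<Rightarrow> 'u) \<Rightarrow> 'x::real_normed_vector) \<Rightarrow> bool" where
  "control_system UU nU \<phi> \<longleftrightarrow>
     input_space UU nU \<and>
     (\<forall>x. \<forall>u\<in>UU. \<phi> 0 x u = x) \<and>
     (\<forall>t\<ge>0. \<forall>x. \<forall>u\<in>UU. \<forall>v\<in>UU. (\<forall>s\<in>{0..t}. u s = v s) \<longrightarrow> \<phi> t x u = \<phi> t x v) \<and>
     (\<forall>x. \<forall>u\<in>UU. continuous_on {0..} (\<lambda>t. \<phi> t x u)) \<and>
     (\<forall>t\<ge>0. \<forall>h\<ge>0. \<forall>x. \<forall>u\<in>UU. \<phi> h (\<phi> t x u) (shiftf u t) = \<phi> (t + h) x u)"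

definition classK :: "(real \<Rightarrow> real) \<Rightarrow> bool" where
  "classK \<gamma> \<longleftrightarrow> continuous_on {0..} \<gamma> \<and> strict_mono_on {0..} \<gamma> \<and> \<gamma> 0 = 0 \<and> (\<forall>r\<ge>0. 0 \<le> \<gamma> r)"

definition classKinf :: "(real \<Rightarrow> real) \<Rightarrow> bool" where
  "classKinf \<gamma> \<longleftrightarrow> classK \<gamma> \<and> \<not> bdd_above (\<gamma> ` {0..})"

definition classL :: "(real \<Rightarrow> real) \<Rightarrow> bool" where
  "classL \<gamma> \<longleftrightarrow> continuous_on {0..} \<gamma> \<and> (\<forall>s\<ge>0. \<forall>t>s. \<gamma> t < \<gamma> s) \<and> (\<forall>r\<ge>0. 0 \<le> \<gamma> r) \<and>
     (\<gamma> \<longlongrightarrow> 0) at_top"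

definition classKL :: "(real \<Rightarrow> real \<Rightarrow> real) \<Rightarrow> bool" where
  "classKL \<beta> \<longleftrightarrow> (\<forall>t\<ge>0. classK (\<lambda>r. \<beta> r t)) \<and> (\<forall>r>0. classL (\<lambda>t. \<beta> r t))"

definition ISS ::
  "(real \<Rightarrow> 'u::real_normed_vector) set \<Rightarrow> ((real \<Rightarrow> 'u) \<Rightarrow> real) \<Rightarrow> (real \<Rightarrow> 'x \<Rightarrow> (real \<Rightarrow> 'u) \<Rightarrow> 'x::real_normed_vector) \<Rightarrow> bool" where
  "ISS UU nU \<phi> \<longleftrightarrow> (\<exists>\<beta> \<gamma>. classKL \<beta> \<and> classK \<gamma> \<and>
     (\<forall>x. \<forall>u\<in>UU. \<forall>t\<ge>0. norm (\<phi> t x u) \<le> \<beta> (norm x) t + \<gamma> (nU u)))"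

definition norm_to_integral_ISS ::
  "(real \<Rightarrow> 'u::real_normed_vector) set \<Rightarrow> ((real \<Rightarrow> 'u) \<Rightarrow> real) \<Rightarrow> (real \<Rightarrow> 'x \<Rightarrow> (real \<Rightarrow> 'u) \<Rightarrow> 'x::real_normed_vector) \<Rightarrow> bool" where
  "norm_to_integral_ISS UU nU \<phi> \<longleftrightarrow> (\<exists>\<alpha> \<psi> \<sigma>. classK \<alpha> \<and> classKinf \<psi> \<and> classKinf \<sigma> \<and>
     (\<forall>x. \<forall>u\<in>UU. \<forall>t\<ge>0. integral {0..t} (\<lambda>s. \<alpha> (norm (\<phi> s x u))) \<le> \<psi> (norm x) + t * \<sigma> (nU u)))"

end

theory Submission
  imports Defs
begin

text \<open>
  Let \<open>\<bar>\<phi>(s)\<bar> \<le> \<beta>(\<bar>x\<bar>, s) + \<gamma>(\<bar>u\<bar>)\<close> be the ISS estimate. Since \<open>\<alpha>(a + b) \<le> \<alpha>(2a) + \<alpha>(2b)\<close>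
  for \<open>\<alpha> \<in> \<K>\<close>, it suffices to find \<open>\<alpha> \<in> \<K>\<close> and \<open>\<psi> \<in> \<K>\<^sub>\<infinity>\<close> with
  \<open>\<integral>\<^sub>0\<^sup>t \<alpha>(2\<beta>(r, s)) ds \<le> \<psi>(r)\<close>; then \<open>\<sigma>(v) = \<alpha>(2\<gamma>(v)) + v\<close> does the job.

  By a diagonal argument \<open>\<alpha>\<close> can be chosen so flat near \<open>0\<close> that \<open>\<alpha>(\<beta>(r, s)) \<le> e\<^sup>-\<^sup>2\<^sup>s\<close>
  whenever \<open>r \<beta>(r, s) \<le> 1 + \<beta>(r, s)\<close>, a condition that holds for all \<open>s\<close> if \<open>r \<le> 1\<close> and for
  all large \<open>s\<close> otherwise. Together with \<open>\<alpha>(\<beta>(r, s)) \<le> \<alpha>(\<beta>(r, 0))\<close> this gives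
  \<open>\<alpha>(\<beta>(r, s)) \<le> c(r) e\<^sup>-\<^sup>s\<close> with \<open>c(r) \<rightarrow> 0\<close> as \<open>r \<rightarrow> 0\<close>. The least such constant is a nondecreasing
  function vanishing at \<open>0\<close> that bounds all the integrals, and averaging turns it into a
  \<open>\<K>\<^sub>\<infinity>\<close> majorant.
\<close>

section \<open>Comparison functions\<close>

lemma
  assumes "classK \<alpha>"
  shows classK_zero: "\<alpha> 0 = 0"
    and classK_nonneg: "0 \<le> r \<Longrightarrow> 0 \<le> \<alpha> r"
    and classK_continuous_on: "continuous_on {0..} \<alpha>"
    and classK_mono: "0 \<le> a \<Longrightarrow> a \<le> b \<Longrightarrow> \<alpha> a \<le> \<alpha> b"
proof -
  show "\<alpha> 0 = 0" "0 \<le> r \<Longrightarrow> 0 \<le> \<alpha> r" "continuous_on {0..} \<alpha>"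
    using assms unfolding classK_def by auto
  assume "0 \<le> a" "a \<le> b"
  then show "\<alpha> a \<le> \<alpha> b"
    using assms strict_mono_onD[of "{0..}" \<alpha> a b] unfolding classK_def
    by (cases "a = b") auto
qed

lemma continuous_on_classK_compose:
  assumes "classK \<alpha>" and "continuous_on S f" and "\<And>x. x \<in> S \<Longrightarrow> 0 \<le> f x"
  shows "continuous_on S (\<lambda>x. \<alpha> (f x))"
proof -
  have "f ` S \<subseteq> {0..}"
    using assms(3) by auto
  with classK_continuous_on[OF assms(1)] assms(2) show ?thesis
    by (rule continuous_on_compose2)
qed

lemma classK_compose:
  assumes "classK \<alpha>" and "classK \<gamma>"
  shows "classK (\<lambda>v. \<alpha> (\<gamma> v))"
  unfolding classK_def
proof (intro conjI allI impI)
  show "continuous_on {0..} (\<lambda>v. \<alpha> (\<gamma> v))"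
    using classK_continuous_on[OF assms(2)] classK_nonneg[OF assms(2)]
    by (rule continuous_on_classK_compose[OF assms(1)]) simp
  show "strict_mono_on {0..} (\<lambda>v. \<alpha> (\<gamma> v))"
  proof (rule strict_mono_onI)
    fix r s :: real
    assume rs: "r \<in> {0..}" "s \<in> {0..}" "r < s"
    have "strict_mono_on {0..} \<alpha>" "strict_mono_on {0..} \<gamma>"
      using assms unfolding classK_def by simp_all
    moreover have "\<gamma> r \<in> {0..}" "\<gamma> s \<in> {0..}"
      using rs classK_nonneg[OF assms(2)] by simp_all
    ultimately show "\<alpha> (\<gamma> r) < \<alpha> (\<gamma> s)"
      using rs by (simp add: strict_mono_onD)
  qed
  show "\<alpha> (\<gamma> 0) = 0"
    using assms by (simp add: classK_zero)
  show "0 \<le> \<alpha> (\<gamma> r)" if "0 \<le> r" for r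
    using assms that by (simp add: classK_nonneg)
qed

lemma classK_scale:
  assumes "0 < c" and "classK \<gamma>"
  shows "classK (\<lambda>v. c * \<gamma> v)"
  using assms continuous_on_mult_left[of "{0..}" \<gamma> c]
  unfolding classK_def strict_mono_on_def by simp

lemma classK_mono_on:
  assumes "classK \<alpha>"
  shows "mono_on {0..} \<alpha>"
  using classK_mono[OF assms] by (auto intro: mono_onI)

lemma classKinf_add_id:
  assumes "continuous_on {0..} f" and "mono_on {0..} f" and "f 0 = 0"
  shows "classKinf (\<lambda>v. f v + v)"
  unfolding classKinf_def classK_def
proof (intro conjI allI impI)
  have f_nonneg: "0 \<le> f v" if "0 \<le> v" for v
    using mono_onD[OF assms(2), of 0 v] assms(3) that by simp
  show "continuous_on {0..} (\<lambda>v. f v + v)"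
    using assms(1) by (intro continuous_intros)
  show "strict_mono_on {0..} (\<lambda>v. f v + v)"
    using mono_onD[OF assms(2)] by (intro strict_mono_onI) (simp add: add_le_less_mono)
  show "f 0 + 0 = 0"
    using assms(3) by simp
  show "0 \<le> f v + v" if "0 \<le> v" for v
    using f_nonneg[OF that] that by simp
  show "\<not> bdd_above ((\<lambda>v. f v + v) ` {0..})"
  proof
    assume "bdd_above ((\<lambda>v. f v + v) ` {0..})"
    then obtain M where "\<And>v. 0 \<le> v \<Longrightarrow> f v + v \<le> M"
      by (auto simp: bdd_above_def)
    from this[of "max M 0 + 1"] show False
      using f_nonneg[of "max M 0 + 1"] by simp
  qed
qed

lemma classKinf_add_id_classK:
  assumes "classK \<alpha>"
  shows "classKinf (\<lambda>v. \<alpha> v + v)"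
  using classK_continuous_on[OF assms] classK_mono_on[OF assms] classK_zero[OF assms]
  by (rule classKinf_add_id)

lemma classK_add_le:
  assumes "classK \<alpha>" and "0 \<le> a" and "0 \<le> b"
  shows "\<alpha> (a + b) \<le> \<alpha> (2 * a) + \<alpha> (2 * b)"
proof (cases "a \<le> b")
  case True
  then have "\<alpha> (a + b) \<le> \<alpha> (2 * b)"
    using assms by (auto intro: classK_mono[OF assms(1)])
  then show ?thesis
    using classK_nonneg[OF assms(1), of "2 * a"] assms by simp
next
  case False
  then have "\<alpha> (a + b) \<le> \<alpha> (2 * a)"
    using assms by (auto intro: classK_mono[OF assms(1)])
  then show ?thesis
    using classK_nonneg[OF assms(1), of "2 * b"] assms by simp
qed

lemma
  assumes "classKL \<beta>" and "0 \<le> t"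
  shows classKL_zero: "\<beta> 0 t = 0"
    and classKL_nonneg: "0 \<le> r \<Longrightarrow> 0 \<le> \<beta> r t"
    and classKL_mono: "0 \<le> r \<Longrightarrow> r \<le> r' \<Longrightarrow> \<beta> r t \<le> \<beta> r' t"
proof -
  have K: "classK (\<lambda>r. \<beta> r t)"
    using assms unfolding classKL_def by simp
  show "\<beta> 0 t = 0"
    using classK_zero[OF K] .
  show "0 \<le> r \<Longrightarrow> 0 \<le> \<beta> r t"
    using classK_nonneg[OF K] .
  show "0 \<le> r \<Longrightarrow> r \<le> r' \<Longrightarrow> \<beta> r t \<le> \<beta> r' t"
    using classK_mono[OF K] .
qed

lemma classKL_continuous_on_initial:
  assumes "classKL \<beta>"
  shows "continuous_on {0..} (\<lambda>r. \<beta> r 0)"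
  using assms unfolding classKL_def classK_def by simp

lemma classKL_tendsto:
  assumes "classKL \<beta>" and "0 < r"
  shows "((\<lambda>t. \<beta> r t) \<longlongrightarrow> 0) at_top"
  using assms unfolding classKL_def classL_def by simp

lemma classKL_antimono:
  assumes "classKL \<beta>" and "0 \<le> r" and "0 \<le> s" and "s \<le> t"
  shows "\<beta> r t \<le> \<beta> r s"
proof (cases "r = 0")
  case True
  then show ?thesis
    using assms classKL_zero[OF assms(1)] by simp
next
  case False
  then have "\<forall>s\<ge>0. \<forall>t>s. \<beta> r t < \<beta> r s"
    using assms unfolding classKL_def classL_def by simp
  then show ?thesis
    using assms by (cases "s = t") (simp_all add: less_imp_le)
qed

lemma classKL_continuous_on:
  assumes "classKL \<beta>" and "0 \<le> r"
  shows "continuous_on {0..} (\<lambda>t. \<beta> r t)"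
proof (cases "r = 0")
  case True
  show ?thesis
    using continuous_on_const[of "{0..}" "0::real"]
    by (rule continuous_on_eq) (simp add: True classKL_zero[OF assms(1)])
next
  case False
  then show ?thesis
    using assms unfolding classKL_def classL_def by simp
qed

lemma classKL_scale:
  assumes "0 < c" and "classKL \<beta>"
  shows "classKL (\<lambda>r t. c * \<beta> r t)"
  unfolding classKL_def
proof (intro conjI allI impI)
  show "classK (\<lambda>r. c * \<beta> r t)" if "0 \<le> t" for t
    using assms that unfolding classKL_def by (simp add: classK_scale)
  show "classL (\<lambda>t. c * \<beta> r t)" if "0 < r" for r
  proof -
    have "classL (\<lambda>t. \<beta> r t)"
      using assms(2) that unfolding classKL_def by simp
    then show ?thesis
      using assms(1) tendsto_mult_right_zero[of "\<lambda>t. \<beta> r t" at_top c]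
        continuous_on_mult_left[of "{0..}" "\<lambda>t. \<beta> r t" c]
      unfolding classL_def by simp
  qed
qed

section \<open>Integrals of monotone functions\<close>

lemma
  fixes G :: "real \<Rightarrow> real"
  assumes "mono_on {a..b} G" and "a \<le> b"
  shows integral_mono_on_lower: "(b - a) * G a \<le> integral {a..b} G"
    and integral_mono_on_upper: "integral {a..b} G \<le> (b - a) * G b"
proof -
  have G: "G integrable_on {a..b}"
    using assms(1) by (rule integrable_on_mono_on)
  have "integral {a..b} (\<lambda>_. G a) \<le> integral {a..b} G"
    using assms by (intro integral_le[OF integrable_const_ivl G]) (auto intro: mono_onD)
  then show "(b - a) * G a \<le> integral {a..b} G"
    using assms(2) by simp
  have "integral {a..b} G \<le> integral {a..b} (\<lambda>_. G b)"
    using assms by (intro integral_le[OF G integrable_const_ivl]) (auto intro: mono_onD)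
  then show "integral {a..b} G \<le> (b - a) * G b"
    using assms(2) by simp
qed

lemma integral_combine_mono_on:
  fixes G :: "real \<Rightarrow> real"
  assumes "mono_on {a..} G" and "a \<le> b" and "b \<le> c"
  shows "integral {a..c} G = integral {a..b} G + integral {b..c} G"
proof -
  have "mono_on {a..c} G"
    using assms(1) by (rule mono_on_subset) auto
  then show ?thesis
    using Henstock_Kurzweil_Integration.integral_combine[OF assms(2,3) integrable_on_mono_on]
    by simp
qed

lemma integral_pos_mono_on:
  fixes G :: "real \<Rightarrow> real"
  assumes "mono_on {a..} G" and "\<And>x. a < x \<Longrightarrow> 0 < G x" and "0 \<le> G a" and "a < b"
  shows "0 < integral {a..b} G"
proof -
  define m where "m = (a + b) / 2"
  have m: "a < m" "m < b"
    using assms(4) by (auto simp: m_def)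
  have "0 \<le> (m - a) * G a"
    using m assms(3) by simp
  also have "\<dots> \<le> integral {a..m} G"
    using m by (intro integral_mono_on_lower mono_on_subset[OF assms(1)]) auto
  also have "\<dots> < integral {a..m} G + (b - m) * G m"
    using m assms(2)[of m] by simp
  also have "\<dots> \<le> integral {a..b} G"
    using m integral_combine_mono_on[OF assms(1), of m b]
      integral_mono_on_lower[OF mono_on_subset[OF assms(1)], of m b]
    by simp
  finally show ?thesis .
qed

lemma continuous_on_indefinite_integral:
  fixes f :: "real \<Rightarrow> 'a::banach"
  assumes "\<And>b. f integrable_on {a..b}"
  shows "continuous_on {a..} (\<lambda>x. integral {a..x} f)"
  unfolding continuous_on_eq_continuous_within
proof
  fix x
  assume x: "x \<in> {a..}"
  have "continuous (at x within {a..x + 1}) (\<lambda>x. integral {a..x} f)"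
    using indefinite_integral_continuous_1[OF assms] x
    by (simp add: continuous_on_eq_continuous_within)
  moreover have "at x within {a..} = at x within {a..x + 1}"
    by (rule at_within_nhd[of _ "{..<x + 1}"]) auto
  ultimately show "continuous (at x within {a..}) (\<lambda>x. integral {a..x} f)"
    by simp
qed

lemma
  fixes p :: "real \<Rightarrow> real"
  assumes mono: "mono_on {0..} p" and nonneg: "0 \<le> p 0"
  shows integrable_mono_on_nonneg: "p integrable_on {0..b}"
    and integral_mono_on_nonneg: "0 \<le> integral {0..b} p"
    and integral_average_le: "0 \<le> b \<Longrightarrow> integral {0..b} p / (1 + b) \<le> p b"
proof -
  have "mono_on {0..b} p"
    using mono by (rule mono_on_subset) auto
  then show int: "p integrable_on {0..b}"
    by (rule integrable_on_mono_on)
  have p_nonneg: "0 \<le> p x" if "0 \<le> x" for x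
    using nonneg mono_onD[OF mono, of 0 x] that by simp
  show "0 \<le> integral {0..b} p"
    using int p_nonneg by (intro integral_nonneg) auto
  assume b: "0 \<le> b"
  have "integral {0..b} p \<le> b * p b"
    using integral_mono_on_upper[OF \<open>mono_on {0..b} p\<close> b] by simp
  also have "\<dots> \<le> (1 + b) * p b"
    using p_nonneg[OF b] by (simp add: mult_right_mono)
  finally show "integral {0..b} p / (1 + b) \<le> p b"
    using b by (simp add: divide_le_eq mult.commute)
qed

section \<open>Minorants and majorants\<close>

lemma classK_integral_average:
  fixes p :: "real \<Rightarrow> real"
  assumes mono: "mono_on {0..} p" and nonneg: "0 \<le> p 0" and pos: "\<And>v. 0 < v \<Longrightarrow> 0 < p v"
  shows "classK (\<lambda>v. integral {0..v} p / (1 + v))"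
  unfolding classK_def
proof (intro conjI allI impI)
  define I where "I v = integral {0..v} p" for v
  have "continuous_on {0..} I"
    unfolding I_def using integrable_mono_on_nonneg[OF mono nonneg]
    by (rule continuous_on_indefinite_integral)
  then show "continuous_on {0..} (\<lambda>v. integral {0..v} p / (1 + v))"
    unfolding I_def by (intro continuous_intros) auto
  show "strict_mono_on {0..} (\<lambda>v. integral {0..v} p / (1 + v))"
  proof (rule strict_mono_onI)
    fix a b :: real
    assume "a \<in> {0..}" "b \<in> {0..}" "a < b"
    then have a: "0 \<le> a" and ab: "a < b"
      by auto
    define J where "J = integral {a..b} p"
    have mono_a: "mono_on {a..} p"
      by (rule mono_on_subset[OF mono]) (use a in auto)
    have pa: "0 \<le> p a"
      using nonneg mono_onD[OF mono, of 0 a] a by simp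
    have split: "I b = I a + J"
      unfolding I_def J_def using integral_combine_mono_on[OF mono a less_imp_le[OF ab]] .
    have J_pos: "0 < J"
      unfolding J_def using mono_a pos a pa ab by (intro integral_pos_mono_on) auto
    have J_lower: "(b - a) * p a \<le> J"
      unfolding J_def by (rule integral_mono_on_lower[OF mono_on_subset[OF mono_a]]) (use ab in auto)
    have "I a * (b - a) \<le> a * p a * (b - a)"
      using integral_mono_on_upper[OF mono_on_subset[OF mono], of 0 a] a ab
      by (simp add: I_def mult_right_mono)
    also have "\<dots> = a * ((b - a) * p a)"
      by simp
    also have "\<dots> \<le> a * J"
      using J_lower a by (rule mult_left_mono)
    also have "\<dots> < (1 + a) * J"
      using J_pos by simp
    finally have "I a * (1 + b) < I b * (1 + a)"
      unfolding split by (simp add: algebra_simps)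
    then show "integral {0..a} p / (1 + a) < integral {0..b} p / (1 + b)"
      using a ab by (simp add: I_def field_simps)
  qed
  show "integral {0..0} p / (1 + 0) = 0"
    by simp
  show "0 \<le> integral {0..v} p / (1 + v)" if "0 \<le> v" for v
    using integral_mono_on_nonneg[OF mono nonneg, of v] that by simp
qed

lemma classK_minorant:
  fixes q :: "real \<Rightarrow> real"
  assumes pos: "\<And>v. 0 < v \<Longrightarrow> 0 < q v"
    and mono: "\<And>v w. 0 < v \<Longrightarrow> v \<le> w \<Longrightarrow> q v \<le> q w"
  shows "\<exists>\<alpha>. classK \<alpha> \<and> (\<forall>v>0. \<alpha> v \<le> q v) \<and> (\<forall>v\<ge>0. \<alpha> v \<le> 1)"
proof -
  define p where "p w = (if 0 < w then min (q w) 1 else 0)" for w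
  have p_mono: "mono_on {0..} p"
  proof (rule mono_onI)
    fix r s :: real
    assume "r \<in> {0..}" "s \<in> {0..}" "r \<le> s"
    then show "p r \<le> p s"
      using pos[of s] mono[of r s] by (auto simp: p_def min_def)
  qed
  have p0: "0 \<le> p 0"
    by (simp add: p_def)
  have p_pos: "0 < p v" if "0 < v" for v
    using pos[OF that] that by (simp add: p_def)
  define \<alpha> where "\<alpha> v = integral {0..v} p / (1 + v)" for v
  have "classK \<alpha>"
    unfolding \<alpha>_def using p_mono p0 p_pos by (rule classK_integral_average)
  moreover have "\<alpha> v \<le> p v" if "0 \<le> v" for v
    unfolding \<alpha>_def by (rule integral_average_le[OF p_mono p0 that])
  moreover have "p v \<le> q v" if "0 < v" for v
    using that by (simp add: p_def)
  moreover have "p v \<le> 1" for v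
    by (simp add: p_def)
  ultimately show ?thesis
    by (meson less_imp_le order_trans)
qed

lemma integral_average_mono:
  fixes G :: "real \<Rightarrow> real"
  assumes mono: "mono_on {0..} G" and nonneg: "0 \<le> G 0" and "0 < x" and "x \<le> y"
  shows "integral {0..x} G / x \<le> integral {0..y} G / y"
proof -
  have split: "integral {0..y} G = integral {0..x} G + integral {x..y} G"
    using assms by (intro integral_combine_mono_on) auto
  have "(y - x) * integral {0..x} G \<le> (y - x) * (x * G x)"
    using integral_mono_on_upper[OF mono_on_subset[OF mono], of 0 x] assms
    by (intro mult_left_mono) auto
  also have "\<dots> = x * ((y - x) * G x)"
    by simp
  also have "\<dots> \<le> x * integral {x..y} G"
    using integral_mono_on_lower[OF mono_on_subset[OF mono], of x y] assms
    by (intro mult_left_mono) auto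
  finally have "y * integral {0..x} G \<le> x * integral {0..y} G"
    unfolding split by (simp add: algebra_simps)
  then show ?thesis
    using assms by (simp add: field_simps)
qed

lemma
  fixes G :: "real \<Rightarrow> real"
  assumes mono: "mono_on {0..} G" and G0: "G 0 = 0" and r: "0 \<le> r"
  shows le_integral_double_average: "G r \<le> integral {0..2 * r} G / r"
    and integral_double_average_le: "integral {0..2 * r} G / r \<le> 2 * G (2 * r)"
proof -
  \<comment> \<open>For \<open>r = 0\<close> the average is \<open>0\<close>, as division by zero yields zero.\<close>
  show "G r \<le> integral {0..2 * r} G / r"
  proof (cases "r = 0")
    case False
    with r have r: "0 < r"
      by simp
    have "r * G r \<le> integral {r..2 * r} G"
      using integral_mono_on_lower[OF mono_on_subset[OF mono], of r "2 * r"] r by simp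
    also have "\<dots> \<le> integral {0..2 * r} G"
      using integral_combine_mono_on[OF mono, of r "2 * r"] integral_mono_on_nonneg[OF mono, of r] r G0
      by simp
    finally show ?thesis
      using r by (simp add: field_simps)
  qed (simp add: G0)
  show "integral {0..2 * r} G / r \<le> 2 * G (2 * r)"
    using integral_mono_on_upper[OF mono_on_subset[OF mono], of 0 "2 * r"] r G0
    by (cases "r = 0") (auto simp: field_simps)
qed

lemma continuous_on_integral_double_average:
  fixes G :: "real \<Rightarrow> real"
  assumes mono: "mono_on {0..} G" and G0: "G 0 = 0"
    and lim: "\<And>e. 0 < e \<Longrightarrow> \<exists>d>0. \<forall>r\<in>{0..d}. G r \<le> e"
  shows "continuous_on {0..} (\<lambda>r. integral {0..2 * r} G / r)"
  unfolding continuous_on_eq_continuous_within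
proof
  fix x :: real
  assume x: "x \<in> {0..}"
  define H where "H r = integral {0..2 * r} G / r" for r
  show "continuous (at x within {0..}) H"
  proof (cases "x = 0")
    case False
    have "continuous_on {0..} (\<lambda>r. integral {0..r} G)"
      using integrable_mono_on_nonneg[OF mono] G0 by (intro continuous_on_indefinite_integral) simp
    then have "continuous_on {0<..} (\<lambda>r. integral {0..2 * r} G)"
      by (rule continuous_on_compose2) (auto intro!: continuous_intros)
    then have "continuous_on {0<..} H"
      unfolding H_def by (intro continuous_intros) auto
    then show ?thesis
      using False x by (simp add: continuous_on_eq_continuous_at continuous_at_imp_continuous_at_within)
  next
    case True
    show ?thesis
      unfolding True continuous_within_eps_delta
    proof (intro allI impI)
      fix e :: real
      assume "0 < e"
      then obtain d where d: "0 < d" "\<And>r. r \<in> {0..d} \<Longrightarrow> G r \<le> e / 4"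
        using lim[of "e / 4"] by auto
      have "dist (H r) (H 0) < e" if "r \<in> {0..}" "dist r 0 < d / 2" for r
      proof -
        have "H r \<le> 2 * G (2 * r)"
          unfolding H_def using integral_double_average_le[OF mono G0] that by simp
        moreover have "G (2 * r) \<le> e / 4"
          using d(2) that by (simp add: dist_real_def)
        ultimately have "H r \<le> e / 2"
          by simp
        moreover have "0 \<le> H r"
          using integral_mono_on_nonneg[OF mono, of "2 * r"] that G0 by (simp add: H_def)
        moreover have "H 0 = 0"
          by (simp add: H_def)
        ultimately show ?thesis
          using \<open>0 < e\<close> by (simp add: dist_real_def)
      qed
      with d(1) show "\<exists>d>0. \<forall>r\<in>{0..}. dist r 0 < d \<longrightarrow> dist (H r) (H 0) < e"
        by (intro exI[of _ "d / 2"]) auto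
    qed
  qed
qed

lemma classKinf_majorant:
  fixes G :: "real \<Rightarrow> real"
  assumes mono: "mono_on {0..} G" and G0: "G 0 = 0"
    and lim: "\<And>e. 0 < e \<Longrightarrow> \<exists>d>0. \<forall>r\<in>{0..d}. G r \<le> e"
  shows "\<exists>\<psi>. classKinf \<psi> \<and> (\<forall>r\<ge>0. G r \<le> \<psi> r)"
proof -
  define H where "H r = integral {0..2 * r} G / r" for r
  have "mono_on {0..} H"
  proof (rule mono_onI)
    fix r s :: real
    assume "r \<in> {0..}" "s \<in> {0..}" "r \<le> s"
    then show "H r \<le> H s"
      using integral_average_mono[OF mono, of "2 * r" "2 * s"] integral_mono_on_nonneg[OF mono, of "2 * s"] G0
      by (cases "r = 0") (auto simp: H_def)
  qed
  with continuous_on_integral_double_average[OF mono G0 lim] have "classKinf (\<lambda>r. H r + r)"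
    unfolding H_def by (intro classKinf_add_id) auto
  moreover have "G r \<le> H r + r" if "0 \<le> r" for r
    using le_integral_double_average[OF mono G0 that] that by (simp add: H_def)
  ultimately show ?thesis
    by blast
qed

lemma integral_le_exp_bound:
  fixes g :: "real \<Rightarrow> real"
  assumes "g integrable_on {0..t}" and "0 \<le> t" and "0 \<le> c"
    and "\<And>s. 0 \<le> s \<Longrightarrow> g s \<le> c * exp (- s)"
  shows "integral {0..t} g \<le> c"
proof -
  have "((\<lambda>s. exp (- s)) has_integral (- exp (- t) - (- exp (- 0)))) {0..t}"
  proof (rule fundamental_theorem_of_calculus[OF assms(2)])
    fix x :: real
    have "((\<lambda>s. - exp (- s)) has_real_derivative exp (- x)) (at x within {0..t})"
      by (auto intro!: derivative_eq_intros)
    then show "((\<lambda>s. - exp (- s)) has_vector_derivative exp (- x)) (at x within {0..t})"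
      by (simp add: has_real_derivative_iff_has_vector_derivative)
  qed
  then have exp_integral: "((\<lambda>s. c * exp (- s)) has_integral c * (1 - exp (- t))) {0..t}"
    using has_integral_mult_right by force
  have "integral {0..t} g \<le> integral {0..t} (\<lambda>s. c * exp (- s))"
    using assms(4) by (intro integral_le[OF assms(1) has_integral_integrable[OF exp_integral]]) auto
  also have "\<dots> = c * (1 - exp (- t))"
    using exp_integral by (rule integral_unique)
  also have "\<dots> \<le> c"
    using assms(3) by (simp add: mult_left_le)
  finally show ?thesis .
qed

lemma classKinf_integral_majorant:
  fixes f :: "real \<Rightarrow> real \<Rightarrow> real"
  assumes cont: "\<And>r. 0 \<le> r \<Longrightarrow> continuous_on {0..} (f r)"
    and nonneg: "\<And>r s. 0 \<le> r \<Longrightarrow> 0 \<le> s \<Longrightarrow> 0 \<le> f r s"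
    and mono: "\<And>r r' s. 0 \<le> r \<Longrightarrow> r \<le> r' \<Longrightarrow> 0 \<le> s \<Longrightarrow> f r s \<le> f r' s"
    and exp_bound: "\<And>r. 0 \<le> r \<Longrightarrow> \<exists>c. \<forall>s\<ge>0. f r s \<le> c * exp (- s)"
    and exp_bound_small: "\<And>e. 0 < e \<Longrightarrow> \<exists>d>0. \<forall>r\<in>{0..d}. \<forall>s\<ge>0. f r s \<le> e * exp (- s)"
  shows "\<exists>\<psi>. classKinf \<psi> \<and> (\<forall>r\<ge>0. \<forall>t\<ge>0. integral {0..t} (f r) \<le> \<psi> r)"
proof -
  define C where "C r = {c. \<forall>s\<ge>0. f r s \<le> c * exp (- s)}" for r
  define G where "G r = Inf (C r)" for r
  have C_nonneg: "0 \<le> c" if "0 \<le> r" "c \<in> C r" for r c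
    using nonneg[OF that(1), of 0] that(2) unfolding C_def by fastforce
  have C_bdd: "bdd_below (C r)" if "0 \<le> r" for r
    using C_nonneg[OF that] by (rule bdd_belowI)
  have G_le: "G r \<le> c" if "0 \<le> r" "c \<in> C r" for r c
    unfolding G_def using that(2) C_bdd[OF that(1)] by (rule cInf_lower)
  have le_G: "integral {0..t} (f r) \<le> G r" if r: "0 \<le> r" and t: "0 \<le> t" for r t
  proof -
    have "f r integrable_on {0..t}"
      using cont[OF r] by (rule integrable_continuous_interval[OF continuous_on_subset]) auto
    then have "integral {0..t} (f r) \<le> c" if "c \<in> C r" for c
      using t C_nonneg[OF r that] that by (intro integral_le_exp_bound) (auto simp: C_def)
    then show ?thesis
      unfolding G_def using exp_bound[OF r] by (intro cInf_greatest) (auto simp: C_def)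
  qed
  have "mono_on {0..} G"
  proof (rule mono_onI)
    fix r r' :: real
    assume "r \<in> {0..}" "r' \<in> {0..}" "r \<le> r'"
    then have "C r' \<subseteq> C r"
      unfolding C_def using mono[of r r'] by (auto intro: order_trans)
    moreover have "C r' \<noteq> {}"
      using exp_bound \<open>r' \<in> {0..}\<close> by (auto simp: C_def)
    ultimately show "G r \<le> G r'"
      unfolding G_def using C_bdd \<open>r \<in> {0..}\<close> by (intro cInf_superset_mono) auto
  qed
  moreover have G_small: "\<exists>d>0. \<forall>r\<in>{0..d}. G r \<le> e" if e: "0 < e" for e
  proof -
    obtain d where "0 < d" and "\<forall>r\<in>{0..d}. e \<in> C r"
      using exp_bound_small[OF e] unfolding C_def by blast
    then show ?thesis
      using G_le by (intro exI[of _ d]) simp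
  qed
  moreover have "G 0 = 0"
  proof -
    have "G 0 \<le> e" if "0 < e" for e
      using G_small[OF that] by auto
    then show ?thesis
      using le_G[of 0 0] field_le_epsilon[of "G 0" 0] by simp
  qed
  ultimately obtain \<psi> where "classKinf \<psi>" and G_le_\<psi>: "\<forall>r\<ge>0. G r \<le> \<psi> r"
    using classKinf_majorant by blast
  moreover have "integral {0..t} (f r) \<le> \<psi> r" if "0 \<le> r" "0 \<le> t" for r t
    using le_G[OF that] G_le_\<psi> that(1) by (blast intro: order_trans)
  ultimately show ?thesis
    by blast
qed

section \<open>Integrable rescaling of \<open>\<K>\<L>\<close> functions\<close>

lemma le_sqrt_mult_exp:
  fixes x a s :: real
  assumes "0 \<le> x" and "x \<le> a" and "x \<le> exp (- 2 * s)"
  shows "x \<le> sqrt a * exp (- s)"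
proof -
  have "x = sqrt x * sqrt x"
    using assms(1) by simp
  also have "\<dots> \<le> sqrt a * sqrt (exp (- 2 * s))"
    using assms by (intro mult_mono real_sqrt_le_mono) auto
  also have "sqrt (exp (- 2 * s)) = exp (- s)"
    using real_sqrt_abs[of "exp (- s)"] by (simp add: power2_eq_square exp_add[symmetric])
  finally show ?thesis .
qed

lemma classKL_eventually_less:
  assumes "classKL \<beta>" and "0 < r" and "0 < e"
  obtains T where "0 \<le> T" and "\<And>s. T \<le> s \<Longrightarrow> \<beta> r s < e"
proof -
  have "eventually (\<lambda>s. \<beta> r s < e) at_top"
    using classKL_tendsto[OF assms(1,2)] assms(3) by (rule order_tendstoD)
  then obtain T where "\<And>s. T \<le> s \<Longrightarrow> \<beta> r s < e"
    unfolding eventually_at_top_linorder by blast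
  then show ?thesis
    using that[of "max T 0"] by simp
qed

lemma classKL_diagonal_decay:
  assumes KL: "classKL \<beta>"
  shows "\<exists>\<alpha>. classK \<alpha> \<and> (\<forall>v\<ge>0. \<alpha> v \<le> 1) \<and>
    (\<forall>r s. 0 \<le> r \<longrightarrow> 0 \<le> s \<longrightarrow> 0 < \<beta> r s \<longrightarrow> r * \<beta> r s \<le> 1 + \<beta> r s \<longrightarrow>
      \<alpha> (\<beta> r s) \<le> exp (- 2 * s))"
proof -
  \<comment> \<open>\<open>q v = exp (- 2 * T)\<close>, where \<open>T\<close> is the last time at which \<open>\<beta> (1 + 1 / v) \<cdot>\<close> is at least \<open>v\<close>.\<close>
  define S where "S v = {exp (- 2 * s) | s. 0 \<le> s \<and> v \<le> \<beta> (1 + 1 / v) s}" for v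
  define q where "q v = Inf (insert 1 (S v))" for v
  have bdd: "bdd_below (insert 1 (S v))" for v
    unfolding S_def bdd_below_def by (rule exI[of _ 0]) auto
  have q_pos: "0 < q v" if v: "0 < v" for v
  proof -
    obtain T where T: "0 \<le> T" "\<And>s. T \<le> s \<Longrightarrow> \<beta> (1 + 1 / v) s < v"
      using classKL_eventually_less[OF KL _ v, of "1 + 1 / v"] v by (auto simp: add_pos_pos)
    have "exp (- 2 * T) \<le> y" if "y \<in> insert 1 (S v)" for y
      using that T by (auto simp: S_def not_le[symmetric]) (meson linorder_le_cases)
    then have "exp (- 2 * T) \<le> q v"
      unfolding q_def by (intro cInf_greatest) auto
    then show ?thesis
      using exp_gt_zero[of "- 2 * T"] by linarith
  qed
  have q_mono: "q v \<le> q w" if "0 < v" "v \<le> w" for v w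
  proof -
    have "\<beta> (1 + 1 / w) s \<le> \<beta> (1 + 1 / v) s" if "0 \<le> s" for s
      using \<open>0 < v\<close> \<open>v \<le> w\<close> that by (intro classKL_mono[OF KL]) (auto simp: frac_le)
    then have "S w \<subseteq> S v"
      using that unfolding S_def by (force intro: order_trans)
    then show ?thesis
      unfolding q_def by (intro cInf_superset_mono bdd) auto
  qed
  obtain \<alpha> where \<alpha>: "classK \<alpha>" "\<forall>v>0. \<alpha> v \<le> q v" "\<forall>v\<ge>0. \<alpha> v \<le> 1"
    using classK_minorant[of q] q_pos q_mono by blast
  have "\<alpha> (\<beta> r s) \<le> exp (- 2 * s)"
    if "0 \<le> r" "0 \<le> s" "0 < \<beta> r s" "r * \<beta> r s \<le> 1 + \<beta> r s" for r s
  proof -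
    have "\<beta> r s \<le> \<beta> (1 + 1 / \<beta> r s) s"
      using that by (intro classKL_mono[OF KL]) (auto simp: field_simps)
    then have "exp (- 2 * s) \<in> S (\<beta> r s)"
      unfolding S_def using that(2) by auto
    then have "q (\<beta> r s) \<le> exp (- 2 * s)"
      unfolding q_def by (intro cInf_lower bdd) auto
    then show ?thesis
      using \<alpha>(2) that(3) by (meson order_trans)
  qed
  then show ?thesis
    using \<alpha>(1,3) by blast
qed

lemma classKL_diagonal_rescaling:
  assumes KL: "classKL \<beta>"
  shows "\<exists>\<alpha>. classK \<alpha> \<and> (\<forall>v\<ge>0. \<alpha> v \<le> 1) \<and>
    (\<forall>r s. 0 \<le> r \<longrightarrow> 0 \<le> s \<longrightarrow> r * \<beta> r s \<le> 1 + \<beta> r s \<longrightarrow>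
      \<alpha> (\<beta> r s) \<le> sqrt (\<alpha> (\<beta> r 0)) * exp (- s))"
proof -
  obtain \<alpha> where \<alpha>: "classK \<alpha>" and le_1: "\<forall>v\<ge>0. \<alpha> v \<le> 1"
    and decay: "\<forall>r s. 0 \<le> r \<longrightarrow> 0 \<le> s \<longrightarrow> 0 < \<beta> r s \<longrightarrow> r * \<beta> r s \<le> 1 + \<beta> r s \<longrightarrow>
      \<alpha> (\<beta> r s) \<le> exp (- 2 * s)"
    using classKL_diagonal_decay[OF KL] by blast
  have "\<alpha> (\<beta> r s) \<le> sqrt (\<alpha> (\<beta> r 0)) * exp (- s)"
    if r: "0 \<le> r" and s: "0 \<le> s" and diagonal: "r * \<beta> r s \<le> 1 + \<beta> r s" for r s
  proof (rule le_sqrt_mult_exp)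
    have \<beta>: "0 \<le> \<beta> r s"
      using classKL_nonneg[OF KL s r] .
    show "0 \<le> \<alpha> (\<beta> r s)"
      using classK_nonneg[OF \<alpha> \<beta>] .
    show "\<alpha> (\<beta> r s) \<le> \<alpha> (\<beta> r 0)"
      using \<beta> classKL_antimono[OF KL r order_refl s] by (rule classK_mono[OF \<alpha>])
    show "\<alpha> (\<beta> r s) \<le> exp (- 2 * s)"
      using decay r s diagonal \<beta> by (cases "\<beta> r s = 0") (auto simp: classK_zero[OF \<alpha>])
  qed
  then show ?thesis
    using \<alpha> le_1 by blast
qed

lemma classKL_exp_rescaling:
  assumes KL: "classKL \<beta>"
  shows "\<exists>\<alpha>. classK \<alpha> \<and> (\<forall>r\<in>{0..1}. \<forall>s\<ge>0. \<alpha> (\<beta> r s) \<le> sqrt (\<alpha> (\<beta> r 0)) * exp (- s)) \<and>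
    (\<forall>r\<ge>0. \<exists>c. \<forall>s\<ge>0. \<alpha> (\<beta> r s) \<le> c * exp (- s))"
proof -
  obtain \<alpha> where \<alpha>: "classK \<alpha>" and le_1: "\<forall>v\<ge>0. \<alpha> v \<le> 1"
    and diagonal: "\<forall>r s. 0 \<le> r \<longrightarrow> 0 \<le> s \<longrightarrow> r * \<beta> r s \<le> 1 + \<beta> r s \<longrightarrow>
      \<alpha> (\<beta> r s) \<le> sqrt (\<alpha> (\<beta> r 0)) * exp (- s)"
    using classKL_diagonal_rescaling[OF KL] by blast
  have near: "\<alpha> (\<beta> r s) \<le> sqrt (\<alpha> (\<beta> r 0)) * exp (- s)" if "r \<in> {0..1}" "0 \<le> s" for r s
    using diagonal that classKL_nonneg[OF KL, of s r] mult_left_le_one_le[of "\<beta> r s" r]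
    by (simp add: mult.commute)
  have far: "\<exists>c. \<forall>s\<ge>0. \<alpha> (\<beta> r s) \<le> c * exp (- s)" if r: "0 \<le> r" for r
  proof (cases "r \<le> 1")
    case True
    then show ?thesis
      using near r by (intro exI[of _ "sqrt (\<alpha> (\<beta> r 0))"]) simp
  next
    case False
    then obtain T where T: "0 \<le> T" "\<And>s. T \<le> s \<Longrightarrow> \<beta> r s < 1 / r"
      using classKL_eventually_less[OF KL, of r "1 / r"] by auto
    have c0: "0 \<le> sqrt (\<alpha> (\<beta> r 0))"
      using classK_nonneg[OF \<alpha> classKL_nonneg[OF KL order_refl r]] by simp
    have "\<alpha> (\<beta> r s) \<le> (sqrt (\<alpha> (\<beta> r 0)) + exp T) * exp (- s)" if s: "0 \<le> s" for s
    proof (cases "T \<le> s")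
      case True
      have "r * \<beta> r s \<le> 1 + \<beta> r s"
        using T(2)[OF True] False classKL_nonneg[OF KL s r] by (simp add: field_simps)
      then have "\<alpha> (\<beta> r s) \<le> sqrt (\<alpha> (\<beta> r 0)) * exp (- s)"
        using diagonal r s by blast
      then show ?thesis
        by (simp add: distrib_right add_increasing2)
    next
      case False
      have "\<alpha> (\<beta> r s) \<le> 1"
        using le_1 classKL_nonneg[OF KL s r] by simp
      also have "\<dots> \<le> exp T * exp (- s)"
        using False by (simp add: exp_add[symmetric])
      also have "\<dots> \<le> (sqrt (\<alpha> (\<beta> r 0)) + exp T) * exp (- s)"
        using c0 by (simp add: distrib_right)
      finally show ?thesis .
    qed
    then show ?thesis
      by blast
  qed
  show ?thesis
    using \<alpha> near far by blast
qed

lemma classKL_initial_small: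
  assumes \<alpha>: "classK \<alpha>" and KL: "classKL \<beta>" and "0 < e"
  obtains d where "0 < d" and "\<And>r. r \<in> {0..d} \<Longrightarrow> sqrt (\<alpha> (\<beta> r 0)) \<le> e"
proof -
  have "continuous_on {0..} (\<lambda>r. \<alpha> (\<beta> r 0))"
    using classKL_continuous_on_initial[OF KL] classKL_nonneg[OF KL order_refl]
    by (rule continuous_on_classK_compose[OF \<alpha>]) simp
  then have "continuous_on {0..} (\<lambda>r. sqrt (\<alpha> (\<beta> r 0)))"
    by (rule continuous_on_real_sqrt)
  moreover have "sqrt (\<alpha> (\<beta> 0 0)) = 0"
    by (simp add: classKL_zero[OF KL] classK_zero[OF \<alpha>])
  ultimately obtain d where "0 < d" and "\<And>r. r \<in> {0..} \<Longrightarrow> dist r 0 < d \<Longrightarrow> sqrt (\<alpha> (\<beta> r 0)) < e"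
    using \<open>0 < e\<close> unfolding continuous_on_iff by (metis atLeast_iff dist_real_def order_refl diff_zero abs_less_iff)
  then show ?thesis
    using that[of "d / 2"] by (force simp: dist_real_def)
qed

lemma classKL_integral_majorant:
  assumes KL: "classKL \<beta>"
  shows "\<exists>\<alpha> \<psi>. classK \<alpha> \<and> classKinf \<psi> \<and>
    (\<forall>r\<ge>0. \<forall>t\<ge>0. (\<lambda>s. \<alpha> (\<beta> r s)) integrable_on {0..t} \<and> integral {0..t} (\<lambda>s. \<alpha> (\<beta> r s)) \<le> \<psi> r)"
proof -
  obtain \<alpha> where \<alpha>: "classK \<alpha>"
    and near: "\<forall>r\<in>{0..1}. \<forall>s\<ge>0. \<alpha> (\<beta> r s) \<le> sqrt (\<alpha> (\<beta> r 0)) * exp (- s)"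
    and far: "\<forall>r\<ge>0. \<exists>c. \<forall>s\<ge>0. \<alpha> (\<beta> r s) \<le> c * exp (- s)"
    using classKL_exp_rescaling[OF KL] by blast
  have cont: "continuous_on {0..} (\<lambda>s. \<alpha> (\<beta> r s))" if "0 \<le> r" for r
    using classKL_continuous_on[OF KL that] classKL_nonneg[OF KL _ that]
    by (rule continuous_on_classK_compose[OF \<alpha>]) simp
  have small: "\<exists>d>0. \<forall>r\<in>{0..d}. \<forall>s\<ge>0. \<alpha> (\<beta> r s) \<le> e * exp (- s)" if e: "0 < e" for e
  proof -
    obtain d where d: "0 < d" "\<And>r. r \<in> {0..d} \<Longrightarrow> sqrt (\<alpha> (\<beta> r 0)) \<le> e"
      using classKL_initial_small[OF \<alpha> KL e] by blast
    have "\<alpha> (\<beta> r s) \<le> e * exp (- s)" if "r \<in> {0..min 1 d}" "0 \<le> s" for r s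
    proof -
      have "\<alpha> (\<beta> r s) \<le> sqrt (\<alpha> (\<beta> r 0)) * exp (- s)"
        using near that by simp
      also have "\<dots> \<le> e * exp (- s)"
        using d(2) that by (intro mult_right_mono) auto
      finally show ?thesis .
    qed
    then show ?thesis
      using d(1) by (intro exI[of _ "min 1 d"]) auto
  qed
  have "\<exists>\<psi>. classKinf \<psi> \<and> (\<forall>r\<ge>0. \<forall>t\<ge>0. integral {0..t} (\<lambda>s. \<alpha> (\<beta> r s)) \<le> \<psi> r)"
  proof (rule classKinf_integral_majorant[OF cont _ _ _ small])
    show "0 \<le> \<alpha> (\<beta> r s)" if "0 \<le> r" "0 \<le> s" for r s
      using classK_nonneg[OF \<alpha> classKL_nonneg[OF KL that(2,1)]] .
    show "\<alpha> (\<beta> r s) \<le> \<alpha> (\<beta> r' s)" if "0 \<le> r" "r \<le> r'" "0 \<le> s" for r r' s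
      using classKL_nonneg[OF KL that(3,1)] classKL_mono[OF KL that(3,1,2)] by (rule classK_mono[OF \<alpha>])
    show "\<exists>c. \<forall>s\<ge>0. \<alpha> (\<beta> r s) \<le> c * exp (- s)" if "0 \<le> r" for r
      using far that by simp
  qed
  then obtain \<psi> where "classKinf \<psi>" "\<forall>r\<ge>0. \<forall>t\<ge>0. integral {0..t} (\<lambda>s. \<alpha> (\<beta> r s)) \<le> \<psi> r"
    by blast
  moreover have "(\<lambda>s. \<alpha> (\<beta> r s)) integrable_on {0..t}" if "0 \<le> r" for r t
    using cont[OF that] by (rule integrable_continuous_interval[OF continuous_on_subset]) auto
  ultimately show ?thesis
    using \<alpha> by blast
qed

lemma integral_classK_sum_bound:
  fixes y b :: "real \<Rightarrow> real"
  assumes \<alpha>: "classK \<alpha>" and "0 \<le> t" and "0 \<le> w"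
    and b_nonneg: "\<And>s. s \<in> {0..t} \<Longrightarrow> 0 \<le> b s"
    and b_int: "(\<lambda>s. \<alpha> (2 * b s)) integrable_on {0..t}"
    and y: "\<And>s. s \<in> {0..t} \<Longrightarrow> 0 \<le> y s \<and> y s \<le> b s + w"
  shows "integral {0..t} (\<lambda>s. \<alpha> (y s)) \<le> integral {0..t} (\<lambda>s. \<alpha> (2 * b s)) + t * \<alpha> (2 * w)"
proof (cases "(\<lambda>s. \<alpha> (y s)) integrable_on {0..t}")
  case True
  have "\<alpha> (y s) \<le> \<alpha> (2 * b s) + \<alpha> (2 * w)" if "s \<in> {0..t}" for s
    using classK_mono[OF \<alpha>, of "y s" "b s + w"] classK_add_le[OF \<alpha> b_nonneg[OF that] \<open>0 \<le> w\<close>] y[OF that]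
    by linarith
  then have "integral {0..t} (\<lambda>s. \<alpha> (y s)) \<le> integral {0..t} (\<lambda>s. \<alpha> (2 * b s) + \<alpha> (2 * w))"
    using True b_int by (intro integral_le integrable_add integrable_const_ivl) auto
  also have "\<dots> = integral {0..t} (\<lambda>s. \<alpha> (2 * b s)) + t * \<alpha> (2 * w)"
    using \<open>0 \<le> t\<close> by (simp add: integral_add[OF b_int integrable_const_ivl])
  finally show ?thesis .
next
  case False
  \<comment> \<open>The Henstock--Kurzweil integral of a non-integrable function is zero.\<close>
  have "0 \<le> integral {0..t} (\<lambda>s. \<alpha> (2 * b s))"
    using b_int b_nonneg classK_nonneg[OF \<alpha>] by (intro integral_nonneg) auto
  moreover have "0 \<le> t * \<alpha> (2 * w)"
    using \<open>0 \<le> t\<close> \<open>0 \<le> w\<close> classK_nonneg[OF \<alpha>] by simp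
  ultimately show ?thesis
    using False by (simp add: not_integrable_integral)
qed

lemma input_space_norm_nonneg:
  assumes "input_space UU nU" and "u \<in> UU"
  shows "0 \<le> nU u"
proof -
  have "\<forall>u\<in>UU. 0 \<le> nU u \<and> (nU u = 0 \<longleftrightarrow> u = (\<lambda>_. 0))"
    using assms(1) unfolding input_space_def by (elim conjE)
  then show ?thesis
    using assms(2) by simp
qed

theorem mainTheorem1:
  fixes UU :: "(real \<Rightarrow> 'u::banach) set"
    and nU :: "(real \<Rightarrow> 'u) \<Rightarrow> real"
    and \<phi> :: "real \<Rightarrow> 'x::banach \<Rightarrow> (real \<Rightarrow> 'u) \<Rightarrow> 'x"
  assumes "control_system UU nU \<phi>"
    and "ISS UU nU \<phi>"
  shows "norm_to_integral_ISS UU nU \<phi>"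
proof -
  obtain \<beta> \<gamma> where \<beta>: "classKL \<beta>" and \<gamma>: "classK \<gamma>"
    and iss: "\<forall>x. \<forall>u\<in>UU. \<forall>t\<ge>0. norm (\<phi> t x u) \<le> \<beta> (norm x) t + \<gamma> (nU u)"
    using assms(2) unfolding ISS_def by blast
  obtain \<alpha> \<psi> where \<alpha>: "classK \<alpha>" and \<psi>: "classKinf \<psi>"
    and \<psi>_bound: "\<forall>r\<ge>0. \<forall>t\<ge>0. (\<lambda>s. \<alpha> (2 * \<beta> r s)) integrable_on {0..t} \<and>
      integral {0..t} (\<lambda>s. \<alpha> (2 * \<beta> r s)) \<le> \<psi> r"
    using classKL_integral_majorant[OF classKL_scale[OF _ \<beta>, of 2]] by auto
  define \<sigma> where "\<sigma> v = \<alpha> (2 * \<gamma> v) + v" for v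
  have \<sigma>: "classKinf \<sigma>"
    unfolding \<sigma>_def using classK_compose[OF \<alpha> classK_scale[OF _ \<gamma>]]
    by (intro classKinf_add_id_classK) simp
  have nU_nonneg: "0 \<le> nU u" if "u \<in> UU" for u
    using assms(1) that unfolding control_system_def by (blast intro: input_space_norm_nonneg)
  have "integral {0..t} (\<lambda>s. \<alpha> (norm (\<phi> s x u))) \<le> \<psi> (norm x) + t * \<sigma> (nU u)"
    if u: "u \<in> UU" and t: "0 \<le> t" for x u t
  proof -
    have "integral {0..t} (\<lambda>s. \<alpha> (norm (\<phi> s x u)))
        \<le> integral {0..t} (\<lambda>s. \<alpha> (2 * \<beta> (norm x) s)) + t * \<alpha> (2 * \<gamma> (nU u))"
      using \<alpha> t classK_nonneg[OF \<gamma> nU_nonneg[OF u]] classKL_nonneg[OF \<beta>] \<psi>_bound iss u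
      by (intro integral_classK_sum_bound) auto
    also have "\<dots> \<le> \<psi> (norm x) + t * \<sigma> (nU u)"
      using \<psi>_bound t nU_nonneg[OF u] by (intro add_mono mult_left_mono) (auto simp: \<sigma>_def)
    finally show ?thesis .
  qed
  then show ?thesis
    unfolding norm_to_integral_ISS_def using \<alpha> \<psi> \<sigma> by blast
qed

end
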